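(* Let $\mu\in(0,1)$. For any $t_{\rm r}>0$, the equation $$\Big(\mu t_{\rm r}+\sqrt{1+t_{\rm r}^2-2t_{\rm r}\cos\theta}\Big)\cos\theta-\mu=0$$ has a unique solution $\theta=\theta_{\rm exit}$ in the interval $[\cos^{-1}\mu,\ \tfrac{\pi}{2}]$. Furthermore, $\theta_{\rm exit}\to\tfrac{\pi}{2}$ as $t_{\rm r}\to\infty$. *)

theory Defs
  imports "HOL-Analysis.Analysis"
begin

definition exit_eq :: "real \<Rightarrow> real \<Rightarrow> real \<Rightarrow> real" where
  "exit_eq \<mu> t \<theta> = (\<mu> * t + sqrt (1 + t^2 - 2 * t * cos \<theta>)) * cos \<theta> - \<mu>"

definition theta_exit :: "real \<Rightarrow> real \<Rightarrow> real" where
  "theta_exit \<mu> t = (THE \<theta>. \<theta> \<in> {arccos \<mu>..pi/2} \<and> exit_eq \<mu> t \<theta> = 0)"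

end

theory Submission imports Defs begin

text \<open>Substituting \<open>c = cos \<theta>\<close> turns the interval \<open>[arccos \<mu>, pi/2]\<close> bijectively
into \<open>[0, \<mu>]\<close>. At \<open>c = 0\<close> the left-hand side is negative and at \<open>c = \<mu>\<close> nonnegative,
so a root exists by the intermediate value theorem. Squaring the equation yields a cubic in \<open>c\<close>
with negative leading coefficient which is negative at \<open>0\<close> and positive at \<open>\<mu>\<close>; such a
cubic has one root below \<open>0\<close>, one above \<open>\<mu>\<close>, and hence only one in \<open>(0, \<mu>]\<close>. Finally a
root satisfies \<open>\<mu> t c \<le> \<mu>\<close>, so \<open>c \<le> 1/t \<rightarrow> 0\<close> and \<open>\<theta> = arccos c \<rightarrow> pi/2\<close>.\<close>

lemma cubic_factor_two_roots:
  fixes a b d e x y z :: real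
  assumes "a*x^3 + b*x^2 + d*x + e = 0" "a*y^3 + b*y^2 + d*y + e = 0" "x \<noteq> y"
  shows "a*z^3 + b*z^2 + d*z + e = (z - x) * (z - y) * (a*(z + x + y) + b)"
proof -
  have "(x - y) * (a*(x^2 + x*y + y^2) + b*(x + y) + d) = 0"
    using assms(1,2) by (simp add: algebra_simps power3_eq_cube power2_eq_square)
  then have d: "d = - (a*(x^2 + x*y + y^2) + b*(x + y))"
    using assms(3) by simp
  have e: "e = - (a*x^3 + b*x^2 + d*x)"
    using assms(1) by simp
  show ?thesis
    unfolding e d by (simp add: algebra_simps power3_eq_cube power2_eq_square)
qed

lemma cubic_root_unique:
  fixes a b d e m x y :: real
  assumes "a < 0" "e < 0" "a*m^3 + b*m^2 + d*m + e > 0"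
    and "0 < x" "x \<le> m" "a*x^3 + b*x^2 + d*x + e = 0"
    and "0 < y" "y \<le> m" "a*y^3 + b*y^2 + d*y + e = 0"
  shows "x = y"
proof (rule ccontr)
  assume "x \<noteq> y"
  note factor = cubic_factor_two_roots[OF assms(6,9) this]
  have "x * y * (a*(x + y) + b) < 0"
    using factor[of 0] \<open>e < 0\<close> by simp
  then have "a*(x + y) + b < 0"
    using \<open>0 < x\<close> \<open>0 < y\<close> by (simp add: mult_less_0_iff)
  moreover have "a * m < 0"
    using assms(1,4,5) by (simp add: mult_neg_pos)
  ultimately have "a*(m + x + y) + b < 0"
    by (simp add: algebra_simps)
  moreover have "0 \<le> (m - x) * (m - y)"
    using assms(5,8) by simp
  ultimately have "a*m^3 + b*m^2 + d*m + e \<le> 0"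
    using factor[of m] by (simp add: mult_nonneg_nonpos)
  then show False
    using assms(3) by simp
qed

lemma cosine_law_radicand_nonneg:
  fixes t c :: real
  assumes "0 \<le> t" "c \<le> 1"
  shows "0 \<le> 1 + t^2 - 2*t*c"
proof -
  have "0 \<le> (1 - t)^2 + 2*t*(1 - c)"
    using assms by simp
  then show ?thesis
    by (simp add: power2_eq_square algebra_simps)
qed

definition exit_eq_cos :: "real \<Rightarrow> real \<Rightarrow> real \<Rightarrow> real" where
  "exit_eq_cos \<mu> t c = (\<mu> * t + sqrt (1 + t^2 - 2 * t * c)) * c - \<mu>"

lemma exit_eq_eq_exit_eq_cos: "exit_eq \<mu> t \<theta> = exit_eq_cos \<mu> t (cos \<theta>)"
  unfolding exit_eq_def exit_eq_cos_def ..

lemma exit_eq_cos_root_cubic: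
  fixes \<mu> t c :: real
  assumes "exit_eq_cos \<mu> t c = 0" "0 \<le> t" "c \<le> 1"
  shows "(-2*t)*c^3 + (1 + t^2 - \<mu>^2*t^2)*c^2 + (2*\<mu>^2*t)*c + (- (\<mu>^2)) = 0"
proof -
  have "c * sqrt (1 + t^2 - 2*t*c) = \<mu> - \<mu>*t*c"
    using assms(1) unfolding exit_eq_cos_def by (simp add: algebra_simps)
  then have "c^2 * (1 + t^2 - 2*t*c) = (\<mu> - \<mu>*t*c)^2"
    using cosine_law_radicand_nonneg[OF assms(2,3)] by (metis power_mult_distrib real_sqrt_pow2)
  then show ?thesis
    by (simp add: algebra_simps power3_eq_cube power2_eq_square)
qed

lemma exit_eq_cos_root_nonzero:
  assumes "exit_eq_cos \<mu> t c = 0" "0 < \<mu>"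
  shows "c \<noteq> 0"
  using assms by (auto simp: exit_eq_cos_def)

lemma exit_eq_cos_root_unique:
  fixes \<mu> t c c' :: real
  assumes \<mu>: "0 < \<mu>" "\<mu> < 1" and t: "0 < t"
    and c: "c \<in> {0..\<mu>}" "exit_eq_cos \<mu> t c = 0"
    and c': "c' \<in> {0..\<mu>}" "exit_eq_cos \<mu> t c' = 0"
  shows "c = c'"
proof (rule cubic_root_unique)
  have "\<mu>^2 * t^2 < t^2"
    using \<mu> t by (simp add: power_less_one_iff abs_less_iff)
  then show "(-2*t)*\<mu>^3 + (1 + t^2 - \<mu>^2*t^2)*\<mu>^2 + (2*\<mu>^2*t)*\<mu> + (- (\<mu>^2)) > 0"
    using \<mu> by (simp add: algebra_simps power3_eq_cube power2_eq_square)
  show "0 < c" "0 < c'"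
    using c c' exit_eq_cos_root_nonzero \<mu>(1) by force+
qed (use \<mu> t c c' exit_eq_cos_root_cubic in auto)

lemma exit_eq_cos_root_exists:
  fixes \<mu> t :: real
  assumes \<mu>: "0 < \<mu>" "\<mu> < 1" and t: "0 < t"
  shows "\<exists>c \<in> {0..\<mu>}. exit_eq_cos \<mu> t c = 0"
proof -
  have "1 \<le> \<mu>*t + sqrt (1 + t^2 - 2*t*\<mu>)"
  proof (cases "1 \<le> \<mu>*t")
    case False
    have "\<mu>^2 * t^2 \<le> t^2"
      using \<mu> by (simp add: mult_left_le_one_le power_le_one)
    then have "(1 - \<mu>*t)^2 \<le> 1 + t^2 - 2*t*\<mu>"
      by (simp add: power2_eq_square algebra_simps)
    then have "1 - \<mu>*t \<le> sqrt (1 + t^2 - 2*t*\<mu>)"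
      by (rule real_le_rsqrt)
    then show ?thesis
      by linarith
  next
    case True
    have "0 \<le> sqrt (1 + t^2 - 2*t*\<mu>)"
      using cosine_law_radicand_nonneg[of t \<mu>] t \<mu> by simp
    with True show ?thesis
      by linarith
  qed
  then have "\<mu> * 1 \<le> \<mu> * (\<mu>*t + sqrt (1 + t^2 - 2*t*\<mu>))"
    using \<mu> by (intro mult_left_mono) auto
  then have "0 \<le> exit_eq_cos \<mu> t \<mu>"
    unfolding exit_eq_cos_def by (simp add: algebra_simps)
  moreover have "exit_eq_cos \<mu> t 0 \<le> 0"
    using \<mu> unfolding exit_eq_cos_def by simp
  moreover have "continuous_on {0..\<mu>} (exit_eq_cos \<mu> t)"
    unfolding exit_eq_cos_def by (intro continuous_intros)
  ultimately show ?thesis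
    using IVT'[of "exit_eq_cos \<mu> t" 0 0 \<mu>] \<mu> by auto
qed

lemma exit_eq_cos_root_le_inverse:
  fixes \<mu> t c :: real
  assumes "0 < \<mu>" "0 < t" "0 \<le> c" "c \<le> 1" "exit_eq_cos \<mu> t c = 0"
  shows "c \<le> inverse t"
proof -
  have "0 \<le> sqrt (1 + t^2 - 2*t*c)"
    using cosine_law_radicand_nonneg[of t c] assms by simp
  then have "\<mu> * t * c \<le> (\<mu> * t + sqrt (1 + t^2 - 2*t*c)) * c"
    using assms(3) by (simp add: distrib_right)
  then have "\<mu> * (t * c) \<le> \<mu> * 1"
    using assms(5) unfolding exit_eq_cos_def by (simp add: algebra_simps)
  then show ?thesis
    using assms(1,2) by (simp add: field_simps)
qed

lemma arccos_cos_exit_interval: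
  fixes \<mu> \<theta> :: real
  assumes "0 \<le> \<mu>" "\<mu> \<le> 1" "\<theta> \<in> {arccos \<mu>..pi/2}"
  shows "arccos (cos \<theta>) = \<theta>"
  using assms arccos_lbound[of \<mu>] by (intro arccos_cos) auto

lemma bij_betw_cos_exit_interval:
  fixes \<mu> :: real
  assumes "0 \<le> \<mu>" "\<mu> \<le> 1"
  shows "bij_betw cos {arccos \<mu>..pi/2} {0..\<mu>}"
proof (rule bij_betw_byWitness[where f' = arccos])
  show "\<forall>\<theta> \<in> {arccos \<mu>..pi/2}. arccos (cos \<theta>) = \<theta>"
    using arccos_cos_exit_interval assms by blast
  show "\<forall>c \<in> {0..\<mu>}. cos (arccos c) = c"
    using assms by auto
  show "cos ` {arccos \<mu>..pi/2} \<subseteq> {0..\<mu>}"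
  proof
    fix c assume "c \<in> cos ` {arccos \<mu>..pi/2}"
    then obtain \<theta> where \<theta>: "\<theta> \<in> {arccos \<mu>..pi/2}" "c = cos \<theta>" by blast
    have "0 \<le> arccos \<mu>"
      using assms by (simp add: arccos_lbound)
    then have "cos \<theta> \<le> cos (arccos \<mu>)"
      using \<theta>(1) by (intro cos_monotone_0_pi_le) auto
    moreover have "0 \<le> cos \<theta>"
      using \<theta>(1) \<open>0 \<le> arccos \<mu>\<close> by (intro cos_ge_zero) auto
    ultimately show "c \<in> {0..\<mu>}"
      using \<theta>(2) assms by auto
  qed
  show "arccos ` {0..\<mu>} \<subseteq> {arccos \<mu>..pi/2}"
    using assms arccos_le_arccos[of _ \<mu>] arccos_le_pi2 by fastforce
qed

lemma bij_betw_Ex1_iff: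
  assumes "bij_betw h A B"
  shows "(\<exists>!x. x \<in> A \<and> P (h x)) \<longleftrightarrow> (\<exists>!y. y \<in> B \<and> P y)"
  using assms unfolding bij_betw_def inj_on_def by blast

lemma exit_eq_unique_root:
  fixes \<mu> t :: real
  assumes "0 < \<mu>" "\<mu> < 1" "0 < t"
  shows "\<exists>!\<theta>. \<theta> \<in> {arccos \<mu>..pi/2} \<and> exit_eq \<mu> t \<theta> = 0"
proof -
  have bij: "bij_betw cos {arccos \<mu>..pi/2} {0..\<mu>}"
    using assms by (intro bij_betw_cos_exit_interval) auto
  have "\<exists>!c. c \<in> {0..\<mu>} \<and> exit_eq_cos \<mu> t c = 0"
    using exit_eq_cos_root_exists[OF assms] exit_eq_cos_root_unique[OF assms] by blast
  then show ?thesis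
    unfolding exit_eq_eq_exit_eq_cos bij_betw_Ex1_iff[OF bij, of "\<lambda>c. exit_eq_cos \<mu> t c = 0"] .
qed

lemma theta_exit_root:
  fixes \<mu> t :: real
  assumes "0 < \<mu>" "\<mu> < 1" "0 < t"
  shows "theta_exit \<mu> t \<in> {arccos \<mu>..pi/2}" "exit_eq \<mu> t (theta_exit \<mu> t) = 0"
  using theI'[OF exit_eq_unique_root[OF assms]] unfolding theta_exit_def by auto

lemma cos_theta_exit_bounds:
  fixes \<mu> t :: real
  assumes "0 < \<mu>" "\<mu> < 1" "0 < t"
  shows "0 \<le> cos (theta_exit \<mu> t)" "cos (theta_exit \<mu> t) \<le> inverse t"
proof -
  have "cos (theta_exit \<mu> t) \<in> {0..\<mu>}"
    using assms theta_exit_root(1)[OF assms] bij_betwE[OF bij_betw_cos_exit_interval[of \<mu>]] by auto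
  then show "0 \<le> cos (theta_exit \<mu> t)" "cos (theta_exit \<mu> t) \<le> inverse t"
    using exit_eq_cos_root_le_inverse theta_exit_root(2)[OF assms] assms
    by (auto simp: exit_eq_eq_exit_eq_cos)
qed

lemma tendsto_cos_theta_exit:
  fixes \<mu> :: real
  assumes "0 < \<mu>" "\<mu> < 1"
  shows "((\<lambda>t. cos (theta_exit \<mu> t)) \<longlongrightarrow> 0) at_top"
proof (rule tendsto_sandwich[where f = "\<lambda>_. 0" and h = inverse])
  show "\<forall>\<^sub>F t in at_top. 0 \<le> cos (theta_exit \<mu> t)"
    using eventually_gt_at_top[of 0] by (rule eventually_mono) (use cos_theta_exit_bounds assms in auto)
  show "\<forall>\<^sub>F t in at_top. cos (theta_exit \<mu> t) \<le> inverse t"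
    using eventually_gt_at_top[of 0] by (rule eventually_mono) (use cos_theta_exit_bounds assms in auto)
  show "(inverse \<longlongrightarrow> (0::real)) at_top"
    by (rule tendsto_inverse_0_at_top[OF filterlim_ident])
qed simp

theorem proposition1:
  fixes \<mu> :: real
  assumes "0 < \<mu>" and "\<mu> < 1"
  shows "(\<forall>t::real. t > 0 \<longrightarrow>
            (\<exists>!\<theta>. \<theta> \<in> {arccos \<mu>..pi/2} \<and> exit_eq \<mu> t \<theta> = 0))
       \<and> ((\<lambda>t. theta_exit \<mu> t) \<longlongrightarrow> pi/2) at_top"
proof -
  have "((\<lambda>t. arccos (cos (theta_exit \<mu> t))) \<longlongrightarrow> arccos 0) at_top"
    using isCont_tendsto_compose[OF isCont_arccos tendsto_cos_theta_exit[OF assms]] by simp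
  moreover have "\<forall>\<^sub>F t in at_top. arccos (cos (theta_exit \<mu> t)) = theta_exit \<mu> t"
    using eventually_gt_at_top[of 0] by (rule eventually_mono)
      (use arccos_cos_exit_interval[of \<mu>] theta_exit_root(1)[OF assms] assms in auto)
  ultimately have "((\<lambda>t. theta_exit \<mu> t) \<longlongrightarrow> pi/2) at_top"
    by (simp add: tendsto_cong)
  then show ?thesis
    using exit_eq_unique_root assms by blast
qed

end
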